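(* Let $\{\epsilon_n\}_{n\ge1}$ be a sequence of positive real numbers and $\{a_n\}_{n\ge1}\subset\mathbb C$. For a sequence $\{a'_n\}_{n\ge 1}\subset\mathbb C$ define rational functions $r_n\colon\overline{\mathbb C}\to\overline{\mathbb C}$ recursively by $r_0(z)=z$, $r_1(z)=\frac{\epsilon_1}{z-a'_1}$, and $$r_{n+2}(z)=r_n(z)+\frac{\epsilon_{n+2}}{r_{n+1}(z)-a'_{n+2}},\qquad n\ge0.$$ Then for every sequence $\{\eta_n\}_{n\ge1}$ of positive numbers there is a sequence $\{a'_n\}_{n\ge1}\subset\mathbb C$ with $|a'_n-a_n|<\eta_n$ for all $n$ such that, for the corresponding $r_n$: (i) for every $n\ge0$, $r_n$ and $r_{n+1}$ have no common pole, and $r_n^{-1}(\infty)\subsetneq r_{n+2}^{-1}(\infty)$; in particular $\infty$ is a pole of $r_n$ exactly when $n$ is even; (ii) for every $n\ge 0$, $r_n$ has exactly $k_n$ poles, all simple; consequently the equation $r_n(z)=a'_{n+1}$ has exactly $k_n$ solutions, all distinct.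
   Context: $\{k_n\}_{n\ge0}$ denotes the Fibonacci sequence: $k_0=k_1=1$, $k_{n+2}=k_{n+1}+k_n$. Poles are counted in $\overline{\mathbb C}$ (including possibly $\infty$). *)

theory Defs
  imports Complex_Main "HOL-Computational_Algebra.Polynomial_Factorial" "HOL-Computational_Algebra.Fraction_Field"
begin

type_synonym ratfun = "complex poly fract"

text \<open>Points of the Riemann sphere: Some z is z in C, None is infinity.\<close>
type_synonym sphere = "complex option"

definition reduced_rep :: "ratfun \<Rightarrow> complex poly \<Rightarrow> complex poly \<Rightarrow> bool" where
  "reduced_rep f p q \<longleftrightarrow> q \<noteq> 0 \<and> coprime p q \<and> f = Fract p q"

definition poles :: "ratfun \<Rightarrow> sphere set" where
  "poles f = {w. \<exists>p q. reduced_rep f p q \<and>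
      (case w of Some z \<Rightarrow> poly q z = 0 | None \<Rightarrow> degree q < degree p)}"

definition simple_pole :: "ratfun \<Rightarrow> sphere \<Rightarrow> bool" where
  "simple_pole f w \<longleftrightarrow> (\<exists>p q. reduced_rep f p q \<and>
      (case w of Some z \<Rightarrow> order z q = 1 | None \<Rightarrow> degree p = degree q + 1))"

definition eval_sphere :: "ratfun \<Rightarrow> sphere \<Rightarrow> sphere" where
  "eval_sphere f w = (SOME v. \<exists>p q. reduced_rep f p q \<and>
      v = (case w of
             Some z \<Rightarrow> (if poly q z = 0 then None else Some (poly p z / poly q z))
           | None \<Rightarrow> (if degree q < degree p then None
                      else if degree p < degree q then Some 0
                      else Some (lead_coeff p / lead_coeff q))))"

fun kfib :: "nat \<Rightarrow> nat" where
  "kfib 0 = 1"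
| "kfib (Suc 0) = 1"
| "kfib (Suc (Suc n)) = kfib (Suc n) + kfib n"

text \<open>The recursively defined rational functions r_n (eps, a' indexed from 1).\<close>
fun rseq :: "(nat \<Rightarrow> real) \<Rightarrow> (nat \<Rightarrow> complex) \<Rightarrow> nat \<Rightarrow> ratfun" where
  "rseq e a 0 = Fract [:0, 1:] 1"
| "rseq e a (Suc 0) = Fract [:complex_of_real (e 1):] [:- a 1, 1:]"
| "rseq e a (Suc (Suc n)) =
     rseq e a n + Fract [:complex_of_real (e (n + 2)):] 1
                    / (rseq e a (Suc n) - Fract [:a (n + 2):] 1)"

end

theory Submission
  imports Defs "HOL-Computational_Algebra.Fundamental_Theorem_Algebra"
    "HOL-Computational_Algebra.Field_as_Ring" "HOL-Number_Theory.Fib"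
begin

(* Write r_n = p_n / q_n in lowest terms and put r_{-1} = 0, so that the recursion also gives r_1.
   With s = p_{n+1} - a'_{n+2} q_{n+1} one gets
     r_{n+2} = (p_n s + \<epsilon>_{n+2} q_{n+1} q_n) / (q_n s),
   and this is again in lowest terms as long as s has no zero in common with q_n. Then the
   finite poles of r_{n+2} are those of r_n together with the zeros of s, and a degree count
   shows that r_{n+2} has a pole at infinity iff r_n has. So everything follows once s is
   squarefree, vanishes at no pole of r_n and has degree k_{n+1}; this holds as soon as a'_{n+2}
   is nonzero and avoids the finitely many critical values of r_{n+1} and the values of r_{n+1}
   at the poles of r_n. Such a value exists arbitrarily close to a_{n+2}, so a' can be chosen
   inductively. *)

lemma kfib_eq_fib: "kfib n = fib (Suc n)"
  by (induction n rule: kfib.induct) simp_all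

lemma exists_close_point_not_in_finite:
  fixes a :: complex
  assumes "finite B" "r > 0"
  shows "\<exists>c. cmod (c - a) < r \<and> c \<notin> B"
proof -
  have "inj_on (\<lambda>t. a + of_real t) {0<..<r}" by (auto simp: inj_on_def)
  hence "infinite ((\<lambda>t. a + of_real t) ` {0<..<r})"
    using assms(2) by (simp add: finite_image_iff)
  hence "(\<lambda>t. a + of_real t) ` {0<..<r} - B \<noteq> {}"
    using Diff_infinite_finite[OF assms(1)] by (metis finite.emptyI)
  then obtain t where "t \<in> {0<..<r}" "a + of_real t \<notin> B" by blast
  thus ?thesis by (intro exI[of _ "a + of_real t"]) simp
qed

lemma coprime_poly_no_common_root:
  fixes p q :: "'a::field poly"
  assumes "coprime p q" "poly p z = 0"
  shows "poly q z \<noteq> 0"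
proof
  assume "poly q z = 0"
  hence "[:-z, 1:] dvd p" "[:-z, 1:] dvd q" using assms(2) by (simp_all add: poly_eq_0_iff_dvd)
  hence "is_unit [:-z, 1:]" using assms(1) coprime_common_divisor by blast
  thus False by (simp add: is_unit_iff_degree)
qed

lemma coprime_iff_no_common_root:
  fixes p q :: "complex poly"
  shows "coprime p q \<longleftrightarrow> (\<forall>z. poly p z = 0 \<longrightarrow> poly q z \<noteq> 0)"
proof (intro iffI allI impI)
  show "poly q z \<noteq> 0" if "coprime p q" "poly p z = 0" for z
    using coprime_poly_no_common_root that .
next
  assume roots: "\<forall>z. poly p z = 0 \<longrightarrow> poly q z \<noteq> 0"
  show "coprime p q"
  proof (rule ccontr)
    assume "\<not> coprime p q"
    moreover have "gcd p q \<noteq> 0" using roots by auto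
    ultimately have "degree (gcd p q) > 0" by (metis is_unit_gcd is_unit_iff_degree gr0I)
    then obtain z where "poly (gcd p q) z = 0" using alg_closed_imp_poly_has_root by blast
    moreover have "gcd p q dvd p" "gcd p q dvd q" by simp_all
    ultimately have "poly p z = 0" "poly q z = 0" by (metis dvd_trans poly_eq_0_iff_dvd)+
    with roots show False by blast
  qed
qed

lemma pencil_root_value:
  fixes p q :: "'a::field poly"
  assumes "coprime p q" "poly (p - smult c q) z = 0"
  shows "poly q z \<noteq> 0" and "c = poly p z / poly q z"
proof -
  have pz: "poly p z = c * poly q z" using assms(2) by simp
  show "poly q z \<noteq> 0"
    using coprime_poly_no_common_root[OF assms(1)] pz by force
  thus "c = poly p z / poly q z" using pz by simp
qed

lemma card_roots_rsquarefree:
  fixes p :: "complex poly"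
  assumes "rsquarefree p"
  shows "card {z. poly p z = 0} = degree p"
proof -
  have "p \<noteq> 0" using assms by (simp add: rsquarefree_def)
  have "degree p = degree (smult (lead_coeff p) (\<Prod>z|poly p z = 0. [:-z, 1:]))"
    using complex_poly_decompose_rsquarefree[OF assms] by simp
  also have "\<dots> = (\<Sum>z|poly p z = 0. degree [:-z, 1:])"
    using \<open>p \<noteq> 0\<close> by (simp add: degree_prod_sum_eq)
  finally show ?thesis by simp
qed

lemma rsquarefree_mult:
  fixes p q :: "'a::idom poly"
  assumes "rsquarefree p" "rsquarefree q" "\<And>z. poly p z = 0 \<Longrightarrow> poly q z \<noteq> 0"
  shows "rsquarefree (p * q)"
  unfolding rsquarefree_def
proof (intro conjI allI)
  show pq: "p * q \<noteq> 0" using assms(1,2) by (simp add: rsquarefree_def)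
  fix z
  have "order z p = 0 \<or> order z q = 0" using assms(3) by (metis order_root)
  moreover have "order z p \<le> 1" "order z q \<le> 1"
    using assms(1,2) unfolding rsquarefree_def by (metis le_refl zero_le_one One_nat_def)+
  ultimately show "order z (p * q) = 0 \<or> order z (p * q) = 1"
    using order_mult[OF pq, of z] by linarith
qed

lemma wronskian_nonzero:
  fixes p q :: "complex poly"
  assumes "coprime p q" "q \<noteq> 0" "degree p \<noteq> 0 \<or> degree q \<noteq> 0"
  shows "pderiv p * q - p * pderiv q \<noteq> 0"
proof
  assume "pderiv p * q - p * pderiv q = 0"
  hence eq: "pderiv p * q = p * pderiv q" by simp
  hence "q dvd p * pderiv q" by (metis dvd_triv_right)
  hence dvd: "q dvd pderiv q"
    using assms(1) by (metis coprime_commute coprime_dvd_mult_right_iff)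
  have "pderiv q = 0"
  proof (rule ccontr)
    assume nz: "pderiv q \<noteq> 0"
    have "degree q \<le> degree (pderiv q)" using dvd nz by (simp add: dvd_imp_degree_le)
    hence "degree q = 0" using degree_pderiv[of q] by simp
    thus False using nz pderiv_eq_0_iff by blast
  qed
  hence "degree q = 0" "pderiv p = 0" using eq assms(2) pderiv_eq_0_iff by auto
  thus False using assms(3) pderiv_eq_0_iff[of p] by simp
qed

lemma finite_non_rsquarefree_pencil:
  fixes p q :: "complex poly"
  assumes "coprime p q" "q \<noteq> 0" "degree p \<noteq> 0 \<or> degree q \<noteq> 0"
  shows "finite {c. \<not> rsquarefree (p - smult c q)}"
proof -
  define W where "W = pderiv p * q - p * pderiv q"
  \<comment> \<open>a double root z of p - c q is a zero of W, and c is the value of p / q at z\<close>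
  have "{c. \<not> rsquarefree (p - smult c q)}
        \<subseteq> (\<lambda>z. poly p z / poly q z) ` {z. poly W z = 0}"
  proof
    fix c assume "c \<in> {c. \<not> rsquarefree (p - smult c q)}"
    then obtain z where root: "poly (p - smult c q) z = 0"
      and "poly (pderiv p) z = c * poly (pderiv q) z"
      by (auto simp: rsquarefree_roots pderiv_diff pderiv_smult)
    hence "poly W z = 0" by (simp add: W_def)
    thus "c \<in> (\<lambda>z. poly p z / poly q z) ` {z. poly W z = 0}"
      using pencil_root_value(2)[OF assms(1) root] by blast
  qed
  moreover have "W \<noteq> 0" using wronskian_nonzero[OF assms] by (simp add: W_def)
  ultimately show ?thesis using poly_roots_finite finite_subset by blast
qed

lemma finite_pencil_roots_at_roots:
  fixes p q Q :: "complex poly"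
  assumes "coprime p q" "Q \<noteq> 0"
  shows "finite {c. \<exists>z. poly Q z = 0 \<and> poly (p - smult c q) z = 0}"
proof -
  have "{c. \<exists>z. poly Q z = 0 \<and> poly (p - smult c q) z = 0}
        \<subseteq> (\<lambda>z. poly p z / poly q z) ` {z. poly Q z = 0}"
    using pencil_root_value(2)[OF assms(1)] by blast
  thus ?thesis using poly_roots_finite[OF assms(2)] finite_subset by blast
qed

lemma degree_diff_smult:
  fixes p q :: "'a::field poly"
  assumes "degree p \<noteq> degree q" "c \<noteq> 0"
  shows "degree (p - smult c q) = max (degree p) (degree q)"
proof (cases "degree p < degree q")
  case True
  thus ?thesis using assms(2) degree_add_eq_right[of p "- smult c q"] by simp
next
  case False
  thus ?thesis using assms degree_add_eq_left[of "- smult c q" p] by simp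
qed

lemma reduced_rep_unique:
  assumes "reduced_rep f p q" "reduced_rep f p' q'"
  shows "\<exists>c. c \<noteq> 0 \<and> p' = smult c p \<and> q' = smult c q"
proof -
  from assms have q: "q \<noteq> 0" "q' \<noteq> 0" and cp: "coprime p q" "coprime p' q'"
    and "Fract p q = Fract p' q'" by (auto simp: reduced_rep_def)
  hence cross: "p * q' = p' * q" by (simp add: eq_fract)
  hence "q dvd q'" "q' dvd q"
    using cp by (metis coprime_commute coprime_dvd_mult_right_iff dvd_triv_right)+
  then obtain k where k: "q' = q * k" "degree q' \<le> degree q"
    using q by (metis dvdE dvd_imp_degree_le)
  hence "degree k = 0" using q by (auto simp: degree_mult_eq)
  then obtain c where "k = [:c:]" by (metis degree_eq_zeroE)
  hence qq: "q' = smult c q" and "c \<noteq> 0" using k q by auto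
  hence "p' * q = smult c p * q" using cross by simp
  hence "p' = smult c p" by (simp only: mult_right_cancel[OF q(1)])
  thus ?thesis using qq \<open>c \<noteq> 0\<close> by blast
qed

lemma ex_reduced_rep_iff:
  assumes "reduced_rep f p q" and "\<And>c p q. c \<noteq> 0 \<Longrightarrow> P (smult c p) (smult c q) = P p q"
  shows "(\<exists>p' q'. reduced_rep f p' q' \<and> P p' q') \<longleftrightarrow> P p q"
proof
  assume "\<exists>p' q'. reduced_rep f p' q' \<and> P p' q'"
  then obtain p' q' where "reduced_rep f p' q'" "P p' q'" by blast
  moreover from reduced_rep_unique[OF assms(1) this(1)]
  obtain c where "c \<noteq> 0" "p' = smult c p" "q' = smult c q" by blast
  ultimately show "P p q" using assms(2) by simp
qed (use assms(1) in blast)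

lemma poles_reduced_rep:
  assumes "reduced_rep f p q"
  shows "poles f = Some ` {z. poly q z = 0} \<union> (if degree q < degree p then {None} else {})"
proof -
  have pole_iff: "w \<in> poles f \<longleftrightarrow>
      (case w of Some z \<Rightarrow> poly q z = 0 | None \<Rightarrow> degree q < degree p)" for w
    unfolding poles_def mem_Collect_eq
    by (rule ex_reduced_rep_iff[OF assms]) (simp split: option.split)
  show ?thesis
  proof (rule set_eqI)
    fix w
    show "w \<in> poles f \<longleftrightarrow>
        w \<in> Some ` {z. poly q z = 0} \<union> (if degree q < degree p then {None} else {})"
      unfolding pole_iff by (cases w) auto
  qed
qed

lemma simple_pole_reduced_rep:
  assumes "reduced_rep f p q"
  shows "simple_pole f w \<longleftrightarrow>
    (case w of Some z \<Rightarrow> order z q = 1 | None \<Rightarrow> degree p = degree q + 1)"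
  unfolding simple_pole_def
  by (rule ex_reduced_rep_iff[OF assms]) (simp add: order_smult split: option.split)

lemma eval_sphere_reduced_rep:
  assumes "reduced_rep f p q"
  shows "eval_sphere f w = (case w of
             Some z \<Rightarrow> (if poly q z = 0 then None else Some (poly p z / poly q z))
           | None \<Rightarrow> (if degree q < degree p then None
                      else if degree p < degree q then Some 0
                      else Some (lead_coeff p / lead_coeff q)))"
    (is "_ = ?E p q")
  unfolding eval_sphere_def
proof (rule some_equality)
  show "\<exists>p' q'. reduced_rep f p' q' \<and> ?E p q = ?E p' q'" using assms by blast
  show "v = ?E p q" if "\<exists>p' q'. reduced_rep f p' q' \<and> v = ?E p' q'" for v
    using that ex_reduced_rep_iff[OF assms, of "\<lambda>p' q'. v = ?E p' q'"]
    by (auto split: option.split)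
qed

lemma eval_sphere_level_set:
  assumes "reduced_rep f p q" "degree p \<noteq> degree q" "c \<noteq> 0"
  shows "{w. eval_sphere f w = Some c} = Some ` {z. poly (p - smult c q) z = 0}"
proof -
  have cp: "coprime p q" using assms(1) by (simp add: reduced_rep_def)
  have "eval_sphere f w = Some c \<longleftrightarrow> (\<exists>z. w = Some z \<and> poly (p - smult c q) z = 0)"
    for w
  proof (cases w)
    case None
    thus ?thesis using assms by (auto simp: eval_sphere_reduced_rep)
  next
    case (Some z)
    have "poly (p - smult c q) z = 0 \<longleftrightarrow> poly q z \<noteq> 0 \<and> poly p z / poly q z = c"
      using pencil_root_value[OF cp] by (auto simp: field_simps)
    thus ?thesis using Some assms(1) by (auto simp: eval_sphere_reduced_rep)
  qed
  thus ?thesis by auto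
qed

lemma rseq_Suc:
  "rseq e a (Suc m) = (case m of 0 \<Rightarrow> 0 | Suc k \<Rightarrow> rseq e a k)
     + Fract [:complex_of_real (e (Suc m)):] 1 / (rseq e a m - Fract [:a (Suc m):] 1)"
proof (cases m)
  case 0
  have "Fract [:0, 1:] 1 - Fract [:a 1:] 1 = Fract [:- a 1, 1:] 1" by simp
  thus ?thesis using 0 by simp
qed (simp add: numeral_2_eq_2)

lemma Fract_pencil_step:
  assumes "Q \<noteq> 0" "q \<noteq> 0" "p - smult c q \<noteq> 0"
  shows "Fract P Q + Fract [:E:] 1 / (Fract p q - Fract [:c:] 1)
       = Fract (P * (p - smult c q) + smult E (q * Q)) (Q * (p - smult c q))"
proof -
  have "Fract p q - Fract [:c:] 1 = Fract (p - smult c q) q" using assms(2) by simp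
  hence "Fract [:E:] 1 / (Fract p q - Fract [:c:] 1) = Fract (smult E q) (p - smult c q)"
    using assms(3) by simp
  thus ?thesis using assms(1,3) by (simp add: algebra_simps)
qed

(* P / Q and p / q stand for r_{m-1} and r_m in lowest terms, where r_{-1} = 0. Note
   fib (Suc m) = k_m, so the last line says that r_m has k_m poles in the extended plane. *)
definition pole_invariant ::
    "nat \<Rightarrow> complex poly \<Rightarrow> complex poly \<Rightarrow> complex poly \<Rightarrow> complex poly \<Rightarrow> bool" where
  "pole_invariant m P Q p q \<longleftrightarrow>
     Q \<noteq> 0 \<and> q \<noteq> 0 \<and> coprime P Q \<and> coprime p q \<and>
     rsquarefree Q \<and> rsquarefree q \<and>
     (\<forall>z. poly Q z = 0 \<longrightarrow> poly q z \<noteq> 0) \<and>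
     (if even m then degree p = degree q + 1 \<and> (P = 0 \<or> degree P < degree Q)
      else degree P = degree Q + 1 \<and> degree p < degree q) \<and>
     degree Q + of_bool (odd m) = fib m \<and> degree q + of_bool (even m) = fib (Suc m)"

definition admissible_value ::
    "complex poly \<Rightarrow> complex poly \<Rightarrow> complex poly \<Rightarrow> complex \<Rightarrow> bool" where
  "admissible_value Q p q c \<longleftrightarrow>
     c \<noteq> 0 \<and> rsquarefree (p - smult c q) \<and>
     (\<forall>z. poly Q z = 0 \<longrightarrow> poly (p - smult c q) z \<noteq> 0)"

lemma pole_invariant_0: "pole_invariant 0 0 1 [:0, 1:] 1"
  by (simp add: pole_invariant_def rsquarefree_roots)

lemma pole_invariant_reduced_rep:
  "pole_invariant m P Q p q \<Longrightarrow> reduced_rep (Fract p q) p q"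
  by (simp add: pole_invariant_def reduced_rep_def)

lemma pole_invariant_degree_pencil:
  assumes "pole_invariant m P Q p q" "c \<noteq> 0"
  shows "degree (p - smult c q) = fib (Suc m)"
proof -
  have "degree p \<noteq> degree q" "max (degree p) (degree q) = fib (Suc m)"
    using assms(1) by (auto simp: pole_invariant_def split: if_splits)
  thus ?thesis using degree_diff_smult[OF _ assms(2)] by simp
qed

lemma finite_inadmissible_values:
  assumes "pole_invariant m P Q p q"
  shows "finite {c. \<not> admissible_value Q p q c}"
proof -
  have "coprime p q" "q \<noteq> 0" "Q \<noteq> 0" "degree p \<noteq> 0 \<or> degree q \<noteq> 0"
    using assms by (auto simp: pole_invariant_def split: if_splits)
  hence "finite ({0} \<union> {c. \<not> rsquarefree (p - smult c q)}
      \<union> {c. \<exists>z. poly Q z = 0 \<and> poly (p - smult c q) z = 0})"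
    using finite_non_rsquarefree_pencil finite_pencil_roots_at_roots by simp
  thus ?thesis by (rule finite_subset[rotated]) (auto simp: admissible_value_def)
qed

lemma coprime_pencil_step:
  fixes P Q p q :: "complex poly"
  assumes "coprime P Q" "coprime p q" "E \<noteq> 0"
    and "\<forall>z. poly Q z = 0 \<longrightarrow> poly (p - smult c q) z \<noteq> 0"
  shows "coprime (P * (p - smult c q) + smult E (q * Q)) (Q * (p - smult c q))"
  unfolding coprime_iff_no_common_root
proof (intro allI impI notI)
  fix z
  assume num: "poly (P * (p - smult c q) + smult E (q * Q)) z = 0"
    and den: "poly (Q * (p - smult c q)) z = 0"
  show False
  proof (cases "poly Q z = 0")
    case True
    hence "poly P z = 0" using num assms(4) by simp
    thus False using coprime_poly_no_common_root[OF assms(1)] True by blast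
  next
    case False
    hence root: "poly (p - smult c q) z = 0" using den by simp
    hence "poly q z = 0" using num False assms(3) by simp
    thus False using pencil_root_value(1)[OF assms(2) root] by blast
  qed
qed

lemma pole_invariant_degree_step:
  assumes inv: "pole_invariant m P Q p q" and "c \<noteq> 0" "E \<noteq> 0"
  shows "if even (Suc m)
    then degree (P * (p - smult c q) + smult E (q * Q)) = degree (Q * (p - smult c q)) + 1
      \<and> (p = 0 \<or> degree p < degree q)
    else degree p = degree q + 1
      \<and> degree (P * (p - smult c q) + smult E (q * Q)) < degree (Q * (p - smult c q))"
proof -
  define s where "s = p - smult c q"
  define P' where "P' = P * s + smult E (q * Q)"
  have "Q \<noteq> 0" "q \<noteq> 0" and fib: "degree q + of_bool (even m) = fib (Suc m)"
    and parity: "if even m then degree p = degree q + 1 \<and> (P = 0 \<or> degree P < degree Q)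
      else degree P = degree Q + 1 \<and> degree p < degree q"
    using inv unfolding pole_invariant_def by blast+
  have ds: "degree s = fib (Suc m)"
    using pole_invariant_degree_pencil[OF inv assms(2)] by (simp add: s_def)
  hence "s \<noteq> 0" using fib_neq_0_nat[of "Suc m"] by auto
  have dQs: "degree (Q * s) = degree Q + degree s"
    using \<open>Q \<noteq> 0\<close> \<open>s \<noteq> 0\<close> by (simp add: degree_mult_eq)
  have dqQ: "degree (smult E (q * Q)) = degree q + degree Q"
    using assms(3) \<open>Q \<noteq> 0\<close> \<open>q \<noteq> 0\<close> by (simp add: degree_mult_eq)
  have "if even (Suc m)
      then degree P' = degree (Q * s) + 1 \<and> (p = 0 \<or> degree p < degree q)
      else degree p = degree q + 1 \<and> degree P' < degree (Q * s)"
  proof (cases "even m")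
    case True
    hence dp: "degree p = degree q + 1" and dP: "P = 0 \<or> degree P < degree Q"
      using parity by simp_all
    have "degree s = degree q + 1" using ds fib True by simp
    hence "degree (P * s) < degree (Q * s)" "degree (smult E (q * Q)) < degree (Q * s)"
      using dP dQs dqQ degree_mult_le[of P s] by auto
    hence "degree P' < degree (Q * s)" unfolding P'_def by (rule degree_add_less)
    thus ?thesis using True dp by simp
  next
    case False
    hence dP: "degree P = degree Q + 1" and dp: "degree p < degree q"
      using parity by simp_all
    hence "P \<noteq> 0" by auto
    have "degree s = degree q" using ds fib False by simp
    hence "degree (P * s) = degree (Q * s) + 1" "degree (smult E (q * Q)) < degree (P * s)"
      using dP dQs dqQ \<open>P \<noteq> 0\<close> \<open>s \<noteq> 0\<close> by (simp_all add: degree_mult_eq)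
    hence "degree P' = degree (Q * s) + 1" unfolding P'_def by (simp add: degree_add_eq_left)
    thus ?thesis using False dp by simp
  qed
  thus ?thesis unfolding s_def[symmetric] P'_def[symmetric] .
qed

lemma pole_invariant_step:
  assumes inv: "pole_invariant m P Q p q" and adm: "admissible_value Q p q c" and "E \<noteq> 0"
  shows "pole_invariant (Suc m) p q
           (P * (p - smult c q) + smult E (q * Q)) (Q * (p - smult c q))"
proof -
  define s where "s = p - smult c q"
  have Q: "Q \<noteq> 0" "coprime P Q" "rsquarefree Q" and q: "q \<noteq> 0" "coprime p q" "rsquarefree q"
    and Qq: "\<forall>z. poly Q z = 0 \<longrightarrow> poly q z \<noteq> 0"
    and fib: "degree Q + of_bool (odd m) = fib m" "degree q + of_bool (even m) = fib (Suc m)"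
    using inv unfolding pole_invariant_def by blast+
  have s: "c \<noteq> 0" "rsquarefree s" "s \<noteq> 0" "\<forall>z. poly Q z = 0 \<longrightarrow> poly s z \<noteq> 0"
    using adm by (auto simp: admissible_value_def s_def rsquarefree_def)
  have "coprime (P * s + smult E (q * Q)) (Q * s)"
    unfolding s_def using coprime_pencil_step Q q assms(3) s(4) by (simp add: s_def)
  moreover have "rsquarefree (Q * s)" using rsquarefree_mult[OF Q(3) s(2)] s(4) by blast
  moreover have "\<forall>z. poly q z = 0 \<longrightarrow> poly (Q * s) z \<noteq> 0"
  proof (intro allI impI)
    fix z assume "poly q z = 0"
    moreover have "poly Q z \<noteq> 0" using Qq \<open>poly q z = 0\<close> by blast
    ultimately show "poly (Q * s) z \<noteq> 0"
      using coprime_poly_no_common_root[OF q(2)] unfolding s_def by auto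
  qed
  moreover have "degree (Q * s) + of_bool (even (Suc m)) = fib (Suc (Suc m))"
    using pole_invariant_degree_pencil[OF inv s(1)] Q(1) s(3) fib(1)
    by (cases "even m") (simp_all add: s_def degree_mult_eq)
  ultimately show ?thesis
    using q Q(1) s(3) fib(2) pole_invariant_degree_step[OF inv s(1) assms(3)]
    unfolding pole_invariant_def s_def[symmetric] by simp
qed

lemma poles_pole_invariant:
  assumes "pole_invariant m P Q p q"
  shows "poles (Fract p q) = Some ` {z. poly q z = 0} \<union> (if even m then {None} else {})"
proof -
  have "degree q < degree p \<longleftrightarrow> even m"
    using assms by (auto simp: pole_invariant_def split: if_splits)
  thus ?thesis using poles_reduced_rep[OF pole_invariant_reduced_rep[OF assms]] by simp
qed

lemma card_poles_pole_invariant: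
  assumes "pole_invariant m P Q p q"
  shows "card (poles (Fract p q)) = fib (Suc m)"
proof -
  have "q \<noteq> 0" "rsquarefree q" "degree q + of_bool (even m) = fib (Suc m)"
    using assms by (simp_all add: pole_invariant_def)
  thus ?thesis unfolding poles_pole_invariant[OF assms]
    by (subst card_Un_disjoint) (auto simp: card_image card_roots_rsquarefree poly_roots_finite)
qed

lemma simple_pole_pole_invariant:
  assumes "pole_invariant m P Q p q" "w \<in> poles (Fract p q)"
  shows "simple_pole (Fract p q) w"
proof -
  have "q \<noteq> 0" "rsquarefree q" "even m \<Longrightarrow> degree p = degree q + 1"
    using assms(1) by (simp_all add: pole_invariant_def)
  thus ?thesis
    using assms(2) rsquarefree_root_order
    unfolding simple_pole_reduced_rep[OF pole_invariant_reduced_rep[OF assms(1)]]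
      poles_pole_invariant[OF assms(1)]
    by (auto split: if_splits)
qed

lemma card_level_set_pole_invariant:
  assumes "pole_invariant m P Q p q" "admissible_value Q p q c"
  shows "card {w. eval_sphere (Fract p q) w = Some c} = fib (Suc m)"
proof -
  have "degree p \<noteq> degree q" using assms(1) by (auto simp: pole_invariant_def split: if_splits)
  moreover have "c \<noteq> 0" and rsf: "rsquarefree (p - smult c q)"
    using assms(2) by (simp_all add: admissible_value_def)
  ultimately have "card {w. eval_sphere (Fract p q) w = Some c}
      = card {z. poly (p - smult c q) z = 0}"
    by (subst eval_sphere_level_set[OF pole_invariant_reduced_rep[OF assms(1)]])
      (simp_all add: card_image del: poly_diff)
  also have "\<dots> = degree (p - smult c q)" by (rule card_roots_rsquarefree[OF rsf])
  also have "\<dots> = fib (Suc m)" by (rule pole_invariant_degree_pencil) fact+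
  finally show ?thesis .
qed

type_synonym rep_pair = "(complex poly \<times> complex poly) \<times> complex poly \<times> complex poly"

fun pencil_step :: "complex \<Rightarrow> complex \<Rightarrow> rep_pair \<Rightarrow> rep_pair" where
  "pencil_step E c ((P, Q), (p, q)) =
     ((p, q), (P * (p - smult c q) + smult E (q * Q), Q * (p - smult c q)))"

locale perturbation =
  fixes \<epsilon> :: "nat \<Rightarrow> real" and a :: "nat \<Rightarrow> complex" and \<eta> :: "nat \<Rightarrow> real"
  assumes \<epsilon>_pos: "n \<ge> 1 \<Longrightarrow> \<epsilon> n > 0" and \<eta>_pos: "n \<ge> 1 \<Longrightarrow> \<eta> n > 0"
begin

fun perturb :: "nat \<Rightarrow> rep_pair \<Rightarrow> complex" where
  "perturb m ((P, Q), (p, q)) =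
     (SOME c. cmod (c - a (Suc m)) < \<eta> (Suc m) \<and> admissible_value Q p q c)"

primrec pole_state :: "nat \<Rightarrow> rep_pair" where
  "pole_state 0 = ((0, 1), ([:0, 1:], 1))"
| "pole_state (Suc m) =
     pencil_step (of_real (\<epsilon> (Suc m))) (perturb m (pole_state m)) (pole_state m)"

(* perturbed 0 is junk: rseq only reads its coefficient sequence from index 1 on. *)
definition perturbed :: "nat \<Rightarrow> complex" where
  "perturbed n = perturb (n - 1) (pole_state (n - 1))"

definition num_poly :: "nat \<Rightarrow> complex poly" where
  "num_poly n = fst (snd (pole_state n))"

definition den_poly :: "nat \<Rightarrow> complex poly" where
  "den_poly n = snd (snd (pole_state n))"

lemma perturb_spec:
  assumes "pole_invariant m P Q p q"
  shows "cmod (perturb m ((P, Q), (p, q)) - a (Suc m)) < \<eta> (Suc m)"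
    and "admissible_value Q p q (perturb m ((P, Q), (p, q)))"
proof -
  have "\<exists>c. cmod (c - a (Suc m)) < \<eta> (Suc m) \<and> admissible_value Q p q c"
    using exists_close_point_not_in_finite[OF finite_inadmissible_values[OF assms] \<eta>_pos]
    by auto
  hence "cmod (perturb m ((P, Q), (p, q)) - a (Suc m)) < \<eta> (Suc m)
      \<and> admissible_value Q p q (perturb m ((P, Q), (p, q)))"
    unfolding perturb.simps by (rule someI_ex)
  thus "cmod (perturb m ((P, Q), (p, q)) - a (Suc m)) < \<eta> (Suc m)"
    and "admissible_value Q p q (perturb m ((P, Q), (p, q)))" by simp_all
qed

lemma pole_state_invariant:
  "pole_state m = ((P, Q), (p, q)) \<Longrightarrow> pole_invariant m P Q p q
     \<and> Fract P Q = (case m of 0 \<Rightarrow> 0 | Suc k \<Rightarrow> rseq \<epsilon> perturbed k)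
     \<and> Fract p q = rseq \<epsilon> perturbed m"
proof (induction m arbitrary: P Q p q)
  case 0
  thus ?case using pole_invariant_0 by (auto simp: fract_collapse)
next
  case (Suc m)
  obtain P0 Q0 p0 q0 where state: "pole_state m = ((P0, Q0), (p0, q0))"
    by (metis surj_pair)
  define c where "c = perturbed (Suc m)"
  define E where "E = complex_of_real (\<epsilon> (Suc m))"
  note IH = Suc.IH[OF state]
  have "c = perturb m ((P0, Q0), (p0, q0))" using state by (simp add: c_def perturbed_def)
  hence adm: "admissible_value Q0 p0 q0 c" using perturb_spec(2) IH by blast
  have eqs: "P = p0" "Q = q0" "p = P0 * (p0 - smult c q0) + smult E (q0 * Q0)"
      "q = Q0 * (p0 - smult c q0)"
    using Suc.prems state by (auto simp: c_def E_def perturbed_def)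
  have "E \<noteq> 0" using \<epsilon>_pos[of "Suc m"] by (simp add: E_def)
  hence "pole_invariant (Suc m) P Q p q"
    unfolding eqs using pole_invariant_step[OF _ adm] IH by blast
  moreover have "Fract p q = rseq \<epsilon> perturbed (Suc m)"
  proof -
    have "Q0 \<noteq> 0" "q0 \<noteq> 0" "p0 - smult c q0 \<noteq> 0"
      using IH adm by (auto simp: pole_invariant_def admissible_value_def rsquarefree_def)
    hence "Fract p q = Fract P0 Q0 + Fract [:E:] 1 / (Fract p0 q0 - Fract [:c:] 1)"
      unfolding eqs by (rule Fract_pencil_step[symmetric])
    thus ?thesis unfolding rseq_Suc[of \<epsilon> perturbed m] using IH by (simp add: c_def E_def)
  qed
  ultimately show ?case using IH eqs by simp
qed

lemma pole_state_cases:
  obtains P Q where "pole_state n = ((P, Q), (num_poly n, den_poly n))"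
proof
  show "pole_state n =
      ((fst (fst (pole_state n)), snd (fst (pole_state n))), (num_poly n, den_poly n))"
    by (simp add: num_poly_def den_poly_def)
qed

lemma pole_state_Suc:
  "pole_state (Suc n) = ((num_poly n, den_poly n), (num_poly (Suc n), den_poly (Suc n)))"
proof -
  obtain P Q where "pole_state n = ((P, Q), (num_poly n, den_poly n))" by (rule pole_state_cases)
  thus ?thesis by (simp add: num_poly_def[of "Suc n"] den_poly_def[of "Suc n"])
qed

lemma rseq_perturbed_eq_Fract: "rseq \<epsilon> perturbed n = Fract (num_poly n) (den_poly n)"
proof -
  obtain P Q where "pole_state n = ((P, Q), (num_poly n, den_poly n))" by (rule pole_state_cases)
  thus ?thesis using pole_state_invariant by simp
qed

lemma pole_invariant_perturbed:
  obtains P Q where "pole_invariant n P Q (num_poly n) (den_poly n)"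
    and "admissible_value Q (num_poly n) (den_poly n) (perturbed (Suc n))"
    and "cmod (perturbed (Suc n) - a (Suc n)) < \<eta> (Suc n)"
proof -
  obtain P Q where state: "pole_state n = ((P, Q), (num_poly n, den_poly n))"
    by (rule pole_state_cases)
  hence "pole_invariant n P Q (num_poly n) (den_poly n)" using pole_state_invariant by simp
  thus ?thesis using that perturb_spec state by (simp add: perturbed_def)
qed

lemma pole_invariant_Suc:
  "pole_invariant (Suc n) (num_poly n) (den_poly n) (num_poly (Suc n)) (den_poly (Suc n))"
  using pole_state_invariant[OF pole_state_Suc] by simp

lemma den_poly_dvd: "den_poly n dvd den_poly (Suc (Suc n))"
proof -
  obtain P Q where "pole_state n = ((P, Q), (num_poly n, den_poly n))" by (rule pole_state_cases)
  thus ?thesis by (simp add: den_poly_def[of "Suc (Suc n)"])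
qed

lemma poles_rseq:
  "poles (rseq \<epsilon> perturbed n) =
     Some ` {z. poly (den_poly n) z = 0} \<union> (if even n then {None} else {})"
proof -
  obtain P Q where "pole_invariant n P Q (num_poly n) (den_poly n)"
    by (rule pole_invariant_perturbed)
  thus ?thesis by (simp add: rseq_perturbed_eq_Fract poles_pole_invariant)
qed

lemma card_poles_rseq: "card (poles (rseq \<epsilon> perturbed n)) = kfib n"
proof -
  obtain P Q where "pole_invariant n P Q (num_poly n) (den_poly n)"
    by (rule pole_invariant_perturbed)
  thus ?thesis by (simp add: rseq_perturbed_eq_Fract card_poles_pole_invariant kfib_eq_fib)
qed

lemma simple_pole_rseq:
  assumes "w \<in> poles (rseq \<epsilon> perturbed n)"
  shows "simple_pole (rseq \<epsilon> perturbed n) w"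
proof -
  obtain P Q where "pole_invariant n P Q (num_poly n) (den_poly n)"
    by (rule pole_invariant_perturbed)
  thus ?thesis using assms by (simp add: rseq_perturbed_eq_Fract simple_pole_pole_invariant)
qed

lemma card_level_set_rseq:
  "card {w. eval_sphere (rseq \<epsilon> perturbed n) w = Some (perturbed (Suc n))} = kfib n"
proof -
  obtain P Q where "pole_invariant n P Q (num_poly n) (den_poly n)"
    and "admissible_value Q (num_poly n) (den_poly n) (perturbed (Suc n))"
    by (rule pole_invariant_perturbed)
  thus ?thesis by (simp add: rseq_perturbed_eq_Fract card_level_set_pole_invariant kfib_eq_fib)
qed

lemma perturbed_close:
  assumes "n \<ge> 1"
  shows "cmod (perturbed n - a n) < \<eta> n"
proof -
  obtain m where "n = Suc m" using assms by (cases n) auto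
  thus ?thesis using pole_invariant_perturbed[of m] by blast
qed

lemma poles_rseq_disjoint: "poles (rseq \<epsilon> perturbed n) \<inter> poles (rseq \<epsilon> perturbed (Suc n)) = {}"
  using pole_invariant_Suc[of n] unfolding poles_rseq by (auto simp: pole_invariant_def)

lemma poles_rseq_psubset: "poles (rseq \<epsilon> perturbed n) \<subset> poles (rseq \<epsilon> perturbed (n + 2))"
proof
  show "poles (rseq \<epsilon> perturbed n) \<subseteq> poles (rseq \<epsilon> perturbed (n + 2))"
    using den_poly_dvd[of n] unfolding poles_rseq by (auto simp: poly_eq_0_iff_dvd dvd_trans)
  have "kfib n < kfib (n + 2)" using fib_neq_0_nat[of "Suc n"] by (simp add: kfib_eq_fib)
  thus "poles (rseq \<epsilon> perturbed n) \<noteq> poles (rseq \<epsilon> perturbed (n + 2))"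
    using card_poles_rseq by (metis less_irrefl)
qed

end

theorem lemma2p2:
  fixes \<epsilon> :: "nat \<Rightarrow> real" and a :: "nat \<Rightarrow> complex" and \<eta> :: "nat \<Rightarrow> real"
  assumes "\<forall>n\<ge>1. \<epsilon> n > 0"
    and "\<forall>n\<ge>1. \<eta> n > 0"
  shows "\<exists>a' :: nat \<Rightarrow> complex.
     (\<forall>n\<ge>1. cmod (a' n - a n) < \<eta> n) \<and>
     (\<forall>n. poles (rseq \<epsilon> a' n) \<inter> poles (rseq \<epsilon> a' (Suc n)) = {}
          \<and> poles (rseq \<epsilon> a' n) \<subset> poles (rseq \<epsilon> a' (n + 2))
          \<and> (None \<in> poles (rseq \<epsilon> a' n) \<longleftrightarrow> even n)) \<and>
     (\<forall>n. card (poles (rseq \<epsilon> a' n)) = kfib n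
          \<and> (\<forall>w\<in>poles (rseq \<epsilon> a' n). simple_pole (rseq \<epsilon> a' n) w)
          \<and> card {w. eval_sphere (rseq \<epsilon> a' n) w = Some (a' (Suc n))} = kfib n)"
proof -
  interpret perturbation \<epsilon> a \<eta> using assms by unfold_locales simp_all
  show ?thesis
  proof (intro exI[of _ perturbed] conjI allI impI ballI)
    show "cmod (perturbed n - a n) < \<eta> n" if "n \<ge> 1" for n using that by (rule perturbed_close)
    show "poles (rseq \<epsilon> perturbed n) \<subset> poles (rseq \<epsilon> perturbed (n + 2))" for n
      by (rule poles_rseq_psubset)
    show "None \<in> poles (rseq \<epsilon> perturbed n) \<longleftrightarrow> even n" for n by (simp add: poles_rseq)
  qed (simp_all add: poles_rseq_disjoint card_poles_rseq simple_pole_rseq card_level_set_rseq)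
qed

end
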